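(* For all sufficiently large $R$ the following holds. Let $V\subset\mathcal D_R$ be a finite set of points and $G_V$ the graph on $V$ in which distinct points are adjacent iff their hyperbolic distance is at most $R$. Let $(i,j)$ be admissible, let $S$ be the set of points of $V$ lying in tiles below $T_{i,j}$ other than $T_{i,j}$ itself, and let $y=|V\cap T_{i,j}|$. Suppose $y\ge 3$ and $G_V[S]$ can be covered by $x$ vertex-disjoint cycles and isolated vertices. Then $G_V[S\cup(V\cap T_{i,j})]$ can be covered by $\max\{1,x-y+1\}$ vertex-disjoint cycles and isolated vertices. Furthermore, if $y>x$, then $G_V[S\cup(V\cap T_{i,j})]$ has a Hamilton cycle (i.e. can be covered by a single cycle) exactly $y-x$ of whose edges have both endpoints in $T_{i,j}$.
   Context: $\mathcal D_R$ is the hyperbolic disk (curvature $-1$) of radius $R$ around the origin, with polar coordinates $(r,\theta)$, $r\in[0,R)$, $\theta\in(0,2\pi]$. Tiling: $i_{\max}=\lceil 0.9R/(2\ln 2)\rceil$, $n_i=2^{4-i+\lfloor R/(2\ln 2)\rfloor}$ for integers $0\le i\le i_{\max}$; $(i,j)$ is admissible if $0\le i\le i_{\max}$, $0\le j<n_i$; $T_{i,j}=\{(r,\theta)\in\mathcal D_R:\ R-2(i+1)\ln 2\le r<R-2i\ln 2,\ 2\pi j/n_i<\theta\le 2\pi(j+1)/n_i\}$. A tile $T_{i',j'}$ is below $T_{i,j}$ if $i'\le i$ and $T_{i',j'}$ is contained in the sector $\{(r,\theta): 2\pi j/n_i<\theta\le 2\pi(j+1)/n_i\}$. A graph $H$ is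 covered by $k$ vertex-disjoint cycles and isolated vertices if its vertex set can be partitioned into $k$ parts, each of which is either a single vertex or the vertex set of a cycle (of length at least $3$) in $H$. *)

theory Defs
  imports Complex_Main
begin

text \<open>Points of the hyperbolic plane in polar coordinates (r, theta).\<close>
type_synonym hpoint = "real \<times> real"

definition hdisk :: "real \<Rightarrow> hpoint set" where
  "hdisk R = {(r, t). 0 \<le> r \<and> r < R \<and> 0 < t \<and> t \<le> 2 * pi}"

text \<open>Hyperbolic distance (curvature -1) via the hyperbolic law of cosines.\<close>
definition hdist :: "hpoint \<Rightarrow> hpoint \<Rightarrow> real" where
  "hdist p q = arcosh (cosh (fst p) * cosh (fst q) - sinh (fst p) * sinh (fst q) * cos (snd p - snd q))"

definition hadj :: "real \<Rightarrow> hpoint \<Rightarrow> hpoint \<Rightarrow> bool" where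
  "hadj R p q \<longleftrightarrow> p \<noteq> q \<and> hdist p q \<le> R"

definition imax :: "real \<Rightarrow> int" where
  "imax R = \<lceil>0.9 * R / (2 * ln 2)\<rceil>"

definition ntiles :: "real \<Rightarrow> nat \<Rightarrow> real" where
  "ntiles R i = (2::real) powr (of_int (4 - int i + \<lfloor>R / (2 * ln 2)\<rfloor>))"

definition admissible :: "real \<Rightarrow> nat \<Rightarrow> nat \<Rightarrow> bool" where
  "admissible R i j \<longleftrightarrow> int i \<le> imax R \<and> real j < ntiles R i"

definition sector :: "real \<Rightarrow> nat \<Rightarrow> nat \<Rightarrow> hpoint set" where
  "sector R i j = {(r, t). 2 * pi * real j / ntiles R i < t \<and> t \<le> 2 * pi * (real j + 1) / ntiles R i}"

definition tile :: "real \<Rightarrow> nat \<Rightarrow> nat \<Rightarrow> hpoint set" where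
  "tile R i j = {(r, t) \<in> hdisk R. R - 2 * (real i + 1) * ln 2 \<le> r \<and> r < R - 2 * real i * ln 2}
                 \<inter> sector R i j"

definition below :: "real \<Rightarrow> nat \<Rightarrow> nat \<Rightarrow> nat \<Rightarrow> nat \<Rightarrow> bool" where
  "below R i' j' i j \<longleftrightarrow> i' \<le> i \<and> tile R i' j' \<subseteq> sector R i j"

definition is_cycle :: "('a \<Rightarrow> 'a \<Rightarrow> bool) \<Rightarrow> 'a list \<Rightarrow> bool" where
  "is_cycle adj vs \<longleftrightarrow> length vs \<ge> 3 \<and> distinct vs \<and>
     (\<forall>k < length vs. adj (vs ! k) (vs ! ((k + 1) mod length vs)))"

definition covered :: "('a \<Rightarrow> 'a \<Rightarrow> bool) \<Rightarrow> 'a set \<Rightarrow> nat \<Rightarrow> bool" where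
  "covered adj W k \<longleftrightarrow> (\<exists>P. finite P \<and> \<Union>P = W \<and> pairwise disjnt P \<and> {} \<notin> P \<and> card P = k \<and>
     (\<forall>p\<in>P. (\<exists>v. p = {v}) \<or> (\<exists>vs. is_cycle adj vs \<and> set vs = p)))"

definition edges_inside :: "'a list \<Rightarrow> 'a set \<Rightarrow> nat" where
  "edges_inside vs T = card {k. k < length vs \<and> vs ! k \<in> T \<and> vs ! ((k + 1) mod length vs) \<in> T}"

end

theory Submission
  imports Defs
begin

text \<open>
  Every point of the tile \<open>T = T(i,j)\<close> is within distance \<open>R\<close> of every point in a tile below
  it: their radii differ by at most about \<open>0.9 R\<close>, and the angular width \<open>2 pi / n(i)\<close> of the
  sector is just small enough to offset the factor \<open>exp (r + r')\<close> in the hyperbolic law of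
  cosines. Hence the points of \<open>V \<inter> T\<close> are adjacent to all of \<open>S \<union> (V \<inter> T)\<close>.
  Now turn \<open>min x y\<close> parts of the cover of \<open>S\<close> into paths \<open>P1, P2, ...\<close> and weave them
  with the points \<open>t1, ..., ty\<close> of \<open>V \<inter> T\<close> into the single cycle \<open>t1 P1 t2 P2 ... ty\<close>,
  keeping the remaining parts. If \<open>y > x\<close> all parts are absorbed, and the edges inside \<open>T\<close>
  are the \<open>y - x\<close> edges between consecutive \<open>t\<close>'s not separated by a path, the closing
  edge \<open>ty t1\<close> included.
\<close>

section \<open>Cycles, paths and edges inside a set\<close>

lemma successively_iff_nth:
  "successively P xs \<longleftrightarrow> (\<forall>k. Suc k < length xs \<longrightarrow> P (xs ! k) (xs ! Suc k))"
proof (induction xs)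
  case (Cons x xs)
  show ?case
  proof (cases xs)
    case (Cons y ys)
    have "(\<forall>k. Suc k < length (x # xs) \<longrightarrow> P ((x # xs) ! k) ((x # xs) ! Suc k)) \<longleftrightarrow>
          P x y \<and> (\<forall>k. Suc k < length xs \<longrightarrow> P (xs ! k) (xs ! Suc k))"
      unfolding Cons by (auto simp: nth_Cons split: nat.splits)
    thus ?thesis using Cons.IH by (simp add: Cons)
  qed simp
qed simp

lemma is_cycle_iff_successively:
  "is_cycle adj vs \<longleftrightarrow>
     3 \<le> length vs \<and> distinct vs \<and> successively adj vs \<and> adj (last vs) (hd vs)"
proof -
  have "(\<forall>k < length vs. adj (vs ! k) (vs ! ((k + 1) mod length vs))) \<longleftrightarrow>
        successively adj vs \<and> adj (last vs) (hd vs)" if "3 \<le> length vs"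
  proof -
    define n where "n = length vs"
    have "vs \<noteq> []"
      using that by auto
    hence ends: "last vs = vs ! (n - 1)" "hd vs = vs ! 0"
      by (simp_all add: n_def last_conv_nth hd_conv_nth)
    have succ: "(k + 1) mod n = (if Suc k < n then Suc k else 0)" if "k < n" for k
      using that by (auto simp: mod_if)
    have "n - 1 + 1 = n"
      using \<open>3 \<le> length vs\<close> by (simp add: n_def)
    hence last: "n - 1 < n" "(n - 1 + 1) mod n = 0"
      by simp_all
    show ?thesis
      unfolding successively_iff_nth ends n_def[symmetric]
    proof safe
      fix k assume "\<forall>k < n. adj (vs ! k) (vs ! ((k + 1) mod n))" "Suc k < n"
      thus "adj (vs ! k) (vs ! Suc k)"
        using succ[of k] by (metis Suc_eq_plus1 Suc_lessD)
    next
      assume "\<forall>k < n. adj (vs ! k) (vs ! ((k + 1) mod n))"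
      thus "adj (vs ! (n - 1)) (vs ! 0)"
        using last by metis
    next
      fix k assume path: "\<forall>k. Suc k < n \<longrightarrow> adj (vs ! k) (vs ! Suc k)"
        and close: "adj (vs ! (n - 1)) (vs ! 0)" and "k < n"
      show "adj (vs ! k) (vs ! ((k + 1) mod n))"
      proof (cases "Suc k < n")
        case False
        hence "k = n - 1" using \<open>k < n\<close> by simp
        thus ?thesis using close last by simp
      qed (use path succ \<open>k < n\<close> in auto)
    qed
  qed
  thus ?thesis unfolding is_cycle_def by auto
qed

fun path_edges_inside :: "'a list \<Rightarrow> 'a set \<Rightarrow> nat" where
  "path_edges_inside (u # v # ws) B = (if u \<in> B \<and> v \<in> B then 1 else 0) + path_edges_inside (v # ws) B"
| "path_edges_inside _ B = 0"

lemma path_edges_inside_Cons: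
  "path_edges_inside (u # ws) B =
     (if ws \<noteq> [] \<and> u \<in> B \<and> hd ws \<in> B then 1 else 0) + path_edges_inside ws B"
  by (cases ws) auto

lemma path_edges_inside_append:
  "path_edges_inside (xs @ ys) B = path_edges_inside xs B + path_edges_inside ys B +
     (if xs \<noteq> [] \<and> ys \<noteq> [] \<and> last xs \<in> B \<and> hd ys \<in> B then 1 else 0)"
  by (induction xs) (auto simp: path_edges_inside_Cons)

lemma path_edges_inside_disjoint: "set xs \<inter> B = {} \<Longrightarrow> path_edges_inside xs B = 0"
  by (induction xs B rule: path_edges_inside.induct) auto

lemma path_edges_inside_subset: "set xs \<subseteq> B \<Longrightarrow> path_edges_inside xs B = length xs - 1"
  by (induction xs B rule: path_edges_inside.induct) auto

lemma path_edges_inside_conv_card: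
  "path_edges_inside xs B = card {k. Suc k < length xs \<and> xs ! k \<in> B \<and> xs ! Suc k \<in> B}"
proof (induction xs B rule: path_edges_inside.induct)
  case (1 u v ws B)
  let ?K = "\<lambda>xs. {k. Suc k < length xs \<and> xs ! k \<in> B \<and> xs ! Suc k \<in> B}"
  have "?K (u # v # ws) = (if u \<in> B \<and> v \<in> B then {0} else {}) \<union> Suc ` ?K (v # ws)"
  proof (intro set_eqI)
    fix k show "k \<in> ?K (u # v # ws) \<longleftrightarrow> k \<in> (if u \<in> B \<and> v \<in> B then {0} else {}) \<union> Suc ` ?K (v # ws)"
      by (cases k) auto
  qed
  moreover have "finite (?K (v # ws))"
    by (rule finite_subset[of _ "{..<length (v # ws)}"]) auto
  ultimately show ?case
    using "1.IH" by (simp add: card_image)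
qed auto

lemma edges_inside_eq_path_edges_inside:
  assumes "vs \<noteq> []"
  shows "edges_inside vs B = path_edges_inside (vs @ [hd vs]) B"
proof -
  have "(vs @ [hd vs]) ! k = vs ! k \<and> (vs @ [hd vs]) ! Suc k = vs ! ((k + 1) mod length vs)"
    if "k < length vs" for k
    using that assms by (auto simp: nth_append mod_if hd_conv_nth)
  thus ?thesis
    unfolding edges_inside_def path_edges_inside_conv_card
    by (intro arg_cong[where f = card] Collect_cong) auto
qed

lemma edges_inside_Int:
  assumes "set vs \<subseteq> V"
  shows "edges_inside vs (V \<inter> T) = edges_inside vs T"
proof -
  have "vs ! k \<in> V \<and> vs ! ((k + 1) mod length vs) \<in> V" if "k < length vs" for k
  proof -
    have "(k + 1) mod length vs < length vs"
      using that by (intro mod_less_divisor) linarith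
    thus ?thesis
      using that assms by (meson nth_mem subsetD)
  qed
  thus ?thesis
    unfolding edges_inside_def by (intro arg_cong[where f = card] Collect_cong) auto
qed

section \<open>Weaving paths into a cycle through universal vertices\<close>

text \<open>The last equation is junk: \<open>weave\<close> is only used with at least as many \<open>ts\<close> as \<open>ls\<close>.\<close>

fun weave :: "'a list \<Rightarrow> 'a list list \<Rightarrow> 'a list" where
  "weave (t # ts) (l # ls) = t # l @ weave ts ls"
| "weave ts [] = ts"
| "weave [] (l # ls) = []"

lemma set_weave: "length ls \<le> length ts \<Longrightarrow> set (weave ts ls) = set ts \<union> set (concat ls)"
  by (induction ts ls rule: weave.induct) auto

lemma length_weave:
  "length ls \<le> length ts \<Longrightarrow> length (weave ts ls) = length ts + length (concat ls)"
  by (induction ts ls rule: weave.induct) auto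

lemma hd_weave: "ts \<noteq> [] \<Longrightarrow> hd (weave ts ls) = hd ts"
  by (induction ts ls rule: weave.induct) auto

lemma last_weave: "length ls < length ts \<Longrightarrow> last (weave ts ls) = last ts"
proof (induction ts ls rule: weave.induct)
  case (1 t ts l ls)
  hence "ts \<noteq> []" "weave ts ls \<noteq> []"
    by (auto simp flip: length_greater_0_conv simp: length_weave)
  thus ?case using 1 by simp
qed auto

lemma distinct_weave:
  assumes "length ls \<le> length ts" "distinct ts" "distinct (concat ls)"
    "set ts \<inter> set (concat ls) = {}"
  shows "distinct (weave ts ls)"
  using assms by (induction ts ls rule: weave.induct) (auto simp: set_weave)

lemma successively_weave:
  assumes "length ls \<le> length ts" "set ts \<subseteq> B"
    "\<forall>l\<in>set ls. l \<noteq> [] \<and> successively adj l \<and> set l \<subseteq> A"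
    "\<forall>u\<in>A \<union> B. \<forall>v\<in>B. u \<noteq> v \<longrightarrow> adj u v \<and> adj v u" "distinct (weave ts ls)"
  shows "successively adj (weave ts ls)"
  using assms
proof (induction ts ls rule: weave.induct)
  case (1 t ts l ls)
  have l: "l \<noteq> []" "successively adj l" "set l \<subseteq> A" and t: "t \<in> B"
    using "1.prems" by auto
  have d: "distinct (t # l @ weave ts ls)"
    using "1.prems" by simp
  have "hd l \<in> A" "t \<noteq> hd l"
    using l d by (auto dest: hd_in_set)
  hence "adj t (hd l)"
    using "1.prems"(4) t by (metis Un_iff)
  moreover have "adj (last l) (hd (weave ts ls))" if "weave ts ls \<noteq> []"
  proof -
    have "ts \<noteq> []"
      using that "1.prems"(1) by (cases ts) auto
    hence "hd (weave ts ls) \<in> B"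
      using "1.prems"(2) by (auto simp: hd_weave dest: hd_in_set)
    moreover have "last l \<in> A" "last l \<noteq> hd (weave ts ls)"
      using l d that by (auto dest: last_in_set hd_in_set)
    ultimately show ?thesis
      using "1.prems"(4) by blast
  qed
  moreover have "successively adj (weave ts ls)"
    using "1.IH" "1.prems" by simp
  ultimately show ?case
    using l by (auto simp: successively_append_iff successively_Cons)
next
  case (2 ts)
  thus ?case
    by (induction ts) (auto simp: successively_Cons, metis UnCI hd_in_set subsetD)
qed auto

lemma path_edges_inside_weave:
  assumes "length ls < length ts" "set ts \<subseteq> B" "\<forall>l\<in>set ls. l \<noteq> [] \<and> set l \<inter> B = {}"
  shows "path_edges_inside (weave ts ls) B = length ts - length ls - 1"
  using assms
proof (induction ts ls rule: weave.induct)
  case (1 t ts l ls)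
  have "l \<noteq> []" "set l \<inter> B = {}"
    using "1.prems" by auto
  hence "path_edges_inside (t # l) B = 0" "last (t # l) \<notin> B"
    by (auto simp: path_edges_inside_Cons path_edges_inside_disjoint dest: hd_in_set last_in_set)
  hence "path_edges_inside ((t # l) @ weave ts ls) B = path_edges_inside (weave ts ls) B"
    by (simp only: path_edges_inside_append) simp
  thus ?case
    using "1.IH" "1.prems" by simp
qed (auto simp: path_edges_inside_subset)

lemma is_cycle_weave:
  assumes "length ls \<le> length ts" "3 \<le> length ts" "distinct ts" "set ts \<subseteq> B"
    "\<forall>l\<in>set ls. l \<noteq> [] \<and> successively adj l \<and> set l \<subseteq> A" "distinct (concat ls)"
    "A \<inter> B = {}" "\<forall>u\<in>A \<union> B. \<forall>v\<in>B. u \<noteq> v \<longrightarrow> adj u v \<and> adj v u"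
  shows "is_cycle adj (weave ts ls)"
proof -
  let ?vs = "weave ts ls"
  have "set ts \<inter> set (concat ls) = {}"
    using assms(4,5,7) by auto
  hence distinct: "distinct ?vs"
    using assms(1,3,6) distinct_weave by blast
  have length: "3 \<le> length ?vs"
    using assms(1,2) by (simp add: length_weave)
  have "ts \<noteq> []"
    using assms(2) by auto
  hence "hd ?vs \<in> B"
    using assms(4) by (auto simp: hd_weave)
  moreover have "last ?vs \<in> A \<union> B"
    using last_in_set[of ?vs] length assms(1,4,5) by (auto simp: set_weave simp flip: length_greater_0_conv)
  moreover have "last ?vs \<noteq> hd ?vs"
    using length distinct
    by (auto simp: last_conv_nth hd_conv_nth nth_eq_iff_index_eq simp flip: length_greater_0_conv)
  ultimately have "adj (last ?vs) (hd ?vs)"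
    using assms(8) by blast
  thus ?thesis
    using length distinct successively_weave[OF assms(1,4,5,8) distinct]
    by (simp add: is_cycle_iff_successively)
qed

lemma edges_inside_weave:
  assumes "length ls < length ts" "set ts \<subseteq> B" "\<forall>l\<in>set ls. l \<noteq> [] \<and> set l \<inter> B = {}"
  shows "edges_inside (weave ts ls) B = length ts - length ls"
proof -
  have "ts \<noteq> []"
    using assms(1) by auto
  hence ts: "ts \<noteq> []" "hd ts \<in> B" "last ts \<in> B"
    using assms(2) by auto
  hence "weave ts ls \<noteq> []"
    using assms(1) by (simp flip: length_greater_0_conv add: length_weave)
  thus ?thesis
    using ts assms path_edges_inside_weave[OF assms]
    by (simp add: edges_inside_eq_path_edges_inside path_edges_inside_append hd_weave last_weave)
qed

section \<open>Cycle covers\<close>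

definition cycle_cover :: "('a \<Rightarrow> 'a \<Rightarrow> bool) \<Rightarrow> 'a set set \<Rightarrow> 'a set \<Rightarrow> bool" where
  "cycle_cover adj P W \<longleftrightarrow> finite P \<and> \<Union>P = W \<and> pairwise disjnt P \<and> {} \<notin> P \<and>
     (\<forall>p\<in>P. (\<exists>v. p = {v}) \<or> (\<exists>vs. is_cycle adj vs \<and> set vs = p))"

lemma covered_iff_cycle_cover: "covered adj W k \<longleftrightarrow> (\<exists>P. cycle_cover adj P W \<and> card P = k)"
  unfolding covered_def cycle_cover_def by blast

lemma cycle_cover_part_path:
  assumes "cycle_cover adj P W" "p \<in> P"
  shows "\<exists>l. l \<noteq> [] \<and> distinct l \<and> successively adj l \<and> set l = p"
proof -
  have "(\<exists>v. p = {v}) \<or> (\<exists>vs. is_cycle adj vs \<and> set vs = p)"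
    using assms unfolding cycle_cover_def by blast
  thus ?thesis
  proof
    assume "\<exists>v. p = {v}"
    then obtain v where "p = {v}" by blast
    thus ?thesis by (intro exI[of _ "[v]"]) simp
  next
    assume "\<exists>vs. is_cycle adj vs \<and> set vs = p"
    then obtain vs where "is_cycle adj vs" "set vs = p" by blast
    thus ?thesis
      by (intro exI[of _ vs]) (auto simp: is_cycle_iff_successively)
  qed
qed

lemma cycle_cover_paths:
  assumes cover: "cycle_cover adj P W" and "Q \<subseteq> P"
  obtains ls where "length ls = card Q" "\<forall>l\<in>set ls. l \<noteq> [] \<and> successively adj l"
    "distinct (concat ls)" "set (concat ls) = \<Union>Q"
proof -
  obtain f where f: "\<forall>p\<in>Q. f p \<noteq> [] \<and> distinct (f p) \<and> successively adj (f p) \<and> set (f p) = p"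
    using cycle_cover_part_path[OF cover] \<open>Q \<subseteq> P\<close> by (metis subsetD)
  have "finite Q"
    using cover \<open>Q \<subseteq> P\<close> unfolding cycle_cover_def by (auto intro: finite_subset)
  then obtain qs where qs: "set qs = Q" "distinct qs"
    using finite_distinct_list by blast
  have "inj_on f Q"
    using f by (metis inj_onI)
  hence "distinct (map f qs)"
    using qs by (simp add: distinct_map)
  moreover have "set ys \<inter> set zs = {}"
    if mem: "ys \<in> set (map f qs)" "zs \<in> set (map f qs)" and ne: "ys \<noteq> zs" for ys zs
  proof -
    obtain p q where "p \<in> Q" "q \<in> Q" "ys = f p" "zs = f q"
      using mem qs by auto
    thus ?thesis
      using cover \<open>Q \<subseteq> P\<close> ne f unfolding cycle_cover_def pairwise_def disjnt_def
      by (metis subsetD)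
  qed
  ultimately have "distinct (concat (map f qs))"
    using f qs by (intro distinct_concat) auto
  moreover have "length (map f qs) = card Q" "set (concat (map f qs)) = \<Union>Q"
    "\<forall>l\<in>set (map f qs). l \<noteq> [] \<and> successively adj l"
    using qs f distinct_card[of qs] by auto
  ultimately show ?thesis
    using that by blast
qed

lemma cycle_cover_absorb:
  assumes cover: "cycle_cover adj P A" and "Q \<subseteq> P" "is_cycle adj vs" and vs: "set vs = B \<union> \<Union>Q"
    and "A \<inter> B = {}" "B \<noteq> {}"
  shows "cycle_cover adj (insert (set vs) (P - Q)) (A \<union> B)"
    and "card (insert (set vs) (P - Q)) = card P - card Q + 1"
proof -
  have P: "finite P" "\<Union>P = A" "pairwise disjnt P"
    using cover unfolding cycle_cover_def by auto
  have "\<not> set vs \<subseteq> A"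
    using vs assms(5,6) by blast
  hence "set vs \<notin> P - Q"
    using P(2) by blast
  thus "card (insert (set vs) (P - Q)) = card P - card Q + 1"
    using P(1) \<open>Q \<subseteq> P\<close> by (simp add: card_Diff_subset finite_subset)
  have "disjnt (set vs) p" if p: "p \<in> P - Q" for p
  proof -
    have "disjnt q p" if "q \<in> Q" for q
      using that p \<open>Q \<subseteq> P\<close> by (intro pairwiseD[OF P(3)]) auto
    moreover have "p \<subseteq> A"
      using p P(2) by blast
    ultimately show ?thesis
      using assms(5) unfolding vs disjnt_def by auto
  qed
  moreover have "pairwise disjnt (P - Q)"
    using P(3) by (rule pairwise_subset) blast
  ultimately have "pairwise disjnt (insert (set vs) (P - Q))"
    by (simp add: pairwise_insert disjnt_sym)
  moreover have "\<Union>(insert (set vs) (P - Q)) = A \<union> B"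
    using \<open>Q \<subseteq> P\<close> vs P(2) by blast
  ultimately show "cycle_cover adj (insert (set vs) (P - Q)) (A \<union> B)"
    using cover assms(3,6) vs unfolding cycle_cover_def by auto
qed

lemma covered_Un_universal:
  assumes "finite B" "A \<inter> B = {}" "3 \<le> card B"
    and universal: "\<forall>u\<in>A \<union> B. \<forall>v\<in>B. u \<noteq> v \<longrightarrow> adj u v \<and> adj v u"
    and "covered adj A x"
  shows "covered adj (A \<union> B) (nat (max 1 (int x - int (card B) + 1)))"
    and "x < card B \<Longrightarrow> \<exists>vs. is_cycle adj vs \<and> set vs = A \<union> B \<and> edges_inside vs B = card B - x"
proof -
  obtain P where cover: "cycle_cover adj P A" and "card P = x"
    using \<open>covered adj A x\<close> covered_iff_cycle_cover by blast
  define m where "m = min x (card B)"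
  obtain Q where Q: "Q \<subseteq> P" "card Q = m"
    using obtain_subset_with_card_n[of m P] \<open>card P = x\<close> unfolding m_def by auto
  obtain ls where ls: "length ls = m" "\<forall>l\<in>set ls. l \<noteq> [] \<and> successively adj l"
    "distinct (concat ls)" "set (concat ls) = \<Union>Q"
    using cycle_cover_paths[OF cover Q(1)] Q(2) by metis
  obtain ts where ts: "set ts = B" "distinct ts"
    using finite_distinct_list[OF \<open>finite B\<close>] by blast
  have "length ts = card B"
    using ts distinct_card by fastforce
  hence length: "length ls \<le> length ts" "3 \<le> length ts"
    using ls(1) assms(3) unfolding m_def by auto
  have "set (concat ls) \<subseteq> A"
    using Q(1) cover ls(4) unfolding cycle_cover_def by auto
  hence paths: "\<forall>l\<in>set ls. l \<noteq> [] \<and> successively adj l \<and> set l \<subseteq> A"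
    using ls(2) by auto
  define vs where "vs = weave ts ls"
  have cycle: "is_cycle adj vs"
    unfolding vs_def using length ts paths ls(3) assms(2) universal by (intro is_cycle_weave) auto
  have set_vs: "set vs = B \<union> \<Union>Q"
    unfolding vs_def using set_weave[OF length(1)] ts ls(4) by simp
  have "B \<noteq> {}"
    using assms(3) by auto
  note absorbed = cycle_cover_absorb[OF cover Q(1) cycle set_vs assms(2) this]
  have "card P - card Q + 1 = nat (max 1 (int x - int (card B) + 1))"
    using \<open>card P = x\<close> Q(2) unfolding m_def by linarith
  thus "covered adj (A \<union> B) (nat (max 1 (int x - int (card B) + 1)))"
    using absorbed unfolding covered_iff_cycle_cover by metis
  assume "x < card B"
  hence "card Q = card P"
    using Q(2) \<open>card P = x\<close> unfolding m_def by simp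
  hence "Q = P"
    using Q(1) cover card_subset_eq unfolding cycle_cover_def by blast
  hence "set vs = A \<union> B"
    using set_vs cover unfolding cycle_cover_def by auto
  moreover have "edges_inside vs B = card B - x"
    unfolding vs_def using \<open>x < card B\<close> \<open>length ts = card B\<close> ls(1) ts(1) paths assms(2)
    by (subst edges_inside_weave) (auto simp: m_def)
  ultimately show "\<exists>vs. is_cycle adj vs \<and> set vs = A \<union> B \<and> edges_inside vs B = card B - x"
    using cycle by blast
qed

section \<open>Distances within the tiling\<close>

lemma one_minus_cos_le: "1 - cos (d::real) \<le> d\<^sup>2 / 2"
proof -
  have "cos d = 1 - 2 * sin (d / 2) ^ 2"
    using cos_double_sin[of "d / 2"] by simp
  moreover have "sin (d / 2) ^ 2 \<le> (d / 2) ^ 2"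
    using abs_sin_x_le_abs_x[of "d / 2"] by (metis abs_ge_zero power2_abs power_mono)
  ultimately show ?thesis by (simp add: power_divide)
qed

lemma cosh_le_exp_abs: "cosh (x::real) \<le> exp \<bar>x\<bar>"
proof -
  have "exp x \<le> exp \<bar>x\<bar>" "exp (- x) \<le> exp \<bar>x\<bar>" by auto
  moreover have "cosh x = (exp x + exp (- x)) / 2" by (simp add: cosh_field_def)
  ultimately show ?thesis by argo
qed

lemma hdist_sym: "hdist p q = hdist q p"
  unfolding hdist_def by (simp add: cos_diff mult.commute)

lemma hadj_sym: "hadj R p q \<longleftrightarrow> hadj R q p"
  unfolding hadj_def by (auto simp: hdist_sym)

lemma hdist_le_if_cosh_bound:
  assumes "0 \<le> fst p" "0 \<le> fst q" "0 \<le> R"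
    and bound: "cosh (fst p - fst q) + exp (fst p + fst q) * (snd p - snd q)\<^sup>2 / 8 \<le> cosh R"
  shows "hdist p q \<le> R"
proof -
  define a b d where "a = fst p" and "b = fst q" and "d = snd p - snd q"
  define E where "E = cosh a * cosh b - sinh a * sinh b * cos d"
  have sinh_prod: "0 \<le> sinh a * sinh b" and "sinh a * sinh b \<le> exp (a + b) / 4"
    using assms(1,2) mult_mono[of "sinh a" "exp a / 2" "sinh b" "exp b / 2"]
    by (simp_all add: a_def b_def sinh_field_def exp_add)
  moreover have "0 \<le> 1 - cos d" "1 - cos d \<le> d\<^sup>2 / 2"
    using one_minus_cos_le[of d] by simp_all
  ultimately have "sinh a * sinh b * (1 - cos d) \<le> exp (a + b) / 4 * (d\<^sup>2 / 2)"
    by (intro mult_mono) auto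
  moreover have E_eq: "E = cosh (a - b) + sinh a * sinh b * (1 - cos d)"
    unfolding E_def cosh_diff by (simp add: algebra_simps)
  ultimately have "E \<le> cosh R"
    using bound unfolding a_def b_def d_def by simp
  moreover have "1 \<le> E"
    using E_eq sinh_prod cosh_real_ge_1[of "a - b"] cos_le_one[of d] by (simp add: add_increasing2)
  ultimately have "arcosh E \<le> arcosh (cosh R)"
    using arcosh_less_iff_real[of "cosh R" E] cosh_real_ge_1[of R] by linarith
  thus ?thesis
    using assms(3) by (simp add: hdist_def arcosh_cosh_real E_def a_def b_def d_def)
qed

lemma ntiles_pos: "0 < ntiles R i"
  by (simp add: ntiles_def)

lemma sector_angle_diff:
  assumes "p \<in> sector R i j" "q \<in> sector R i j"
  shows "\<bar>snd p - snd q\<bar> < 2 * pi / ntiles R i"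
proof -
  have "2 * pi * (real j + 1) / ntiles R i = 2 * pi * real j / ntiles R i + 2 * pi / ntiles R i"
    by (simp add: add_divide_distrib distrib_left)
  thus ?thesis
    using assms unfolding sector_def by (auto split: prod.splits)
qed

lemma ntiles_lower_bound: "8 * exp (R / 2 - real i * ln 2) \<le> ntiles R i"
proof -
  have "2 powr (3 - real i + R / (2 * ln 2)) \<le> ntiles R i"
    unfolding ntiles_def
    by (intro powr_mono; use real_of_int_floor_add_one_ge[of "R / (2 * ln 2)"] in linarith)
  moreover have "2 powr (3 - real i + R / (2 * ln 2)) = exp (3 * ln 2) * exp (R / 2 - real i * ln 2)"
    by (simp add: powr_def field_simps flip: exp_add)
  moreover have "exp (3 * ln 2) = (8::real)"
    using exp_of_nat_mult[of 3 "ln (2::real)"] by simp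
  ultimately show ?thesis by simp
qed

lemma imax_bound:
  assumes "int i \<le> imax R"
  shows "2 * real i * ln 2 < 0.9 * R + 2 * ln 2"
proof -
  have "real i < 0.9 * R / (2 * ln 2) + 1"
    using assms ceiling_correct[of "0.9 * R / (2 * ln 2)"] unfolding imax_def by linarith
  hence "real i * (2 * ln 2) < (0.9 * R / (2 * ln 2) + 1) * (2 * ln 2)"
    by (intro mult_strict_right_mono) auto
  also have "\<dots> = 0.9 * R + 2 * ln 2"
    by (simp add: field_simps)
  finally show ?thesis by simp
qed

lemma hdist_le_within_sector:
  assumes R: "500 \<le> R" and i: "int i \<le> imax R" and p: "p \<in> tile R i j"
    and q: "q \<in> hdisk R \<inter> sector R i j" "R - 2 * (real i + 1) * ln 2 \<le> fst q"
  shows "hdist p q \<le> R"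
proof -
  define a b c n where "a = fst p" and "b = fst q" and "c = real i * ln 2" and "n = ntiles R i"
  have a: "0 \<le> a" "R - 2 * c - 2 * ln 2 \<le> a" "a < R - 2 * c"
    using p unfolding tile_def hdisk_def a_def c_def by (auto simp: algebra_simps)
  have b: "0 \<le> b" "R - 2 * c - 2 * ln 2 \<le> b" "b < R"
    using q unfolding hdisk_def b_def c_def by (auto simp: algebra_simps)
  have c: "0 \<le> c" "2 * c < 0.9 * R + 2 * ln 2"
    using imax_bound[OF i] unfolding c_def by simp_all
  have "\<bar>a - b\<bar> \<le> 0.9 * R + 4 * ln 2"
    using a b c by linarith
  hence "cosh (a - b) \<le> exp (0.9 * R + 4 * ln 2)"
    using cosh_le_exp_abs[of "a - b"] by (meson exp_le_cancel_iff order_trans)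
  also have "\<dots> = 16 * exp (0.9 * R)"
    using exp_of_nat_mult[of 4 "ln (2::real)"] by (simp add: exp_add)
  also have "\<dots> \<le> 8 / 25 * exp R"
  proof -
    have "50 \<le> exp (0.1 * R)"
      using exp_ge_add_one_self[of "0.1 * R"] R by linarith
    moreover have "exp R = exp (0.9 * R) * exp (0.1 * R)"
      by (simp flip: exp_add)
    ultimately show ?thesis by simp
  qed
  finally have radial: "cosh (a - b) \<le> 8 / 25 * exp R" .
  have n: "0 < n" "64 * exp (R - 2 * c) \<le> n\<^sup>2"
  proof -
    show "0 < n" unfolding n_def by (rule ntiles_pos)
    have "(8 * exp (R / 2 - c))\<^sup>2 \<le> n\<^sup>2"
      using ntiles_lower_bound[of R i] unfolding n_def c_def by (intro power_mono) auto
    thus "64 * exp (R - 2 * c) \<le> n\<^sup>2"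
      by (simp add: power2_eq_square flip: exp_add)
  qed
  have "\<bar>snd p - snd q\<bar> < 2 * pi / n"
    using sector_angle_diff[of p R i j q] p q unfolding tile_def n_def by auto
  hence "(snd p - snd q)\<^sup>2 \<le> (2 * pi / n)\<^sup>2"
    by (metis abs_ge_zero less_imp_le power2_abs power_mono)
  hence "exp (a + b) * (snd p - snd q)\<^sup>2 / 8 \<le> exp (2 * R - 2 * c) * (2 * pi / n)\<^sup>2 / 8"
    using a b by (intro divide_right_mono mult_mono) auto
  also have "\<dots> = exp R * exp (R - 2 * c) * pi\<^sup>2 / (2 * n\<^sup>2)"
    using n by (simp add: field_simps power2_eq_square flip: exp_add)
  also have "\<dots> \<le> exp R * exp (R - 2 * c) * pi\<^sup>2 / (2 * (64 * exp (R - 2 * c)))"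
    using n by (intro divide_left_mono) auto
  also have "\<dots> = pi\<^sup>2 / 128 * exp R"
    by simp
  also have "\<dots> \<le> 1 / 8 * exp R"
    using power_mono[OF less_imp_le[OF pi_less_4], of 2] by simp
  finally have angular: "exp (a + b) * (snd p - snd q)\<^sup>2 / 8 \<le> 1 / 8 * exp R" .
  have "exp R / 2 \<le> cosh R"
    by (simp add: cosh_field_def)
  with radial angular show ?thesis
    using a b R exp_gt_zero[of R] unfolding a_def b_def
    by (intro hdist_le_if_cosh_bound) linarith+
qed

lemma below_refl: "below R i j i j"
  unfolding below_def tile_def by auto

lemma tile_below_sector:
  assumes "below R i' j' i j" "q \<in> tile R i' j'"
  shows "q \<in> hdisk R \<inter> sector R i j" "R - 2 * (real i + 1) * ln 2 \<le> fst q"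
proof -
  have "i' \<le> i" "tile R i' j' \<subseteq> sector R i j"
    using assms(1) unfolding below_def by auto
  moreover have "R - 2 * (real i' + 1) * ln 2 \<le> fst q" "q \<in> hdisk R"
    using assms(2) unfolding tile_def by auto
  ultimately show "q \<in> hdisk R \<inter> sector R i j" "R - 2 * (real i + 1) * ln 2 \<le> fst q"
    using assms(2) by (auto intro: order_trans[rotated])
qed

lemma hadj_tile_below:
  assumes "500 \<le> R" "admissible R i j" "p \<in> tile R i j"
    and "below R i' j' i j" "q \<in> tile R i' j'" "p \<noteq> q"
  shows "hadj R p q"
  using assms hdist_le_within_sector[of R i p j q] tile_below_sector[of R i' j' i j q]
  unfolding hadj_def admissible_def by auto

lemma nat_eq_if_same_unit_interval:
  assumes "real j < x" "x \<le> real j + 1" "real k < x" "x \<le> real k + 1"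
  shows "j = k"
  using assms by linarith

lemma tile_index_unique:
  assumes "q \<in> tile R i j" "q \<in> tile R i' j'"
  shows "(i, j) = (i', j')"
proof -
  have "real m < (R - fst q) / (2 * ln 2) \<and> (R - fst q) / (2 * ln 2) \<le> real m + 1"
    if "q \<in> tile R m l" for m l
    using that unfolding tile_def by (auto simp: field_simps)
  hence i: "i = i'"
    using assms nat_eq_if_same_unit_interval by blast
  have "real l < snd q * ntiles R m / (2 * pi) \<and> snd q * ntiles R m / (2 * pi) \<le> real l + 1"
    if "q \<in> tile R m l" for m l
    using that ntiles_pos[of R m] unfolding tile_def sector_def by (auto simp: field_simps)
  hence "j = j'"
    using assms nat_eq_if_same_unit_interval unfolding i by blast
  with i show ?thesis by simp
qed

theorem mainTheorem8:
  "\<exists>R0::real. \<forall>R \<ge> R0. \<forall>(V::hpoint set) i j x.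
     finite V \<and> V \<subseteq> hdisk R \<and> admissible R i j \<longrightarrow>
     (let T = tile R i j;
          S = {v \<in> V. \<exists>i' j'. admissible R i' j' \<and> below R i' j' i j \<and> (i', j') \<noteq> (i, j) \<and> v \<in> tile R i' j'};
          y = card (V \<inter> T)
      in y \<ge> 3 \<and> covered (hadj R) S x \<longrightarrow>
           covered (hadj R) (S \<union> (V \<inter> T)) (nat (max 1 (int x - int y + 1))) \<and>
           (y > x \<longrightarrow> (\<exists>vs. is_cycle (hadj R) vs \<and> set vs = S \<union> (V \<inter> T) \<and>
                                edges_inside vs T = y - x)))"
proof (intro exI[of _ 500] allI impI, unfold Let_def, intro impI)
  fix R :: real and V :: "hpoint set" and i j x
  define T where "T = tile R i j"
  define S where "S = {v \<in> V. \<exists>i' j'. admissible R i' j' \<and> below R i' j' i j \<and> (i', j') \<noteq> (i, j) \<and> v \<in> tile R i' j'}"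
  assume R: "500 \<le> R" and V: "finite V \<and> V \<subseteq> hdisk R \<and> admissible R i j"
    and "3 \<le> card (V \<inter> tile R i j) \<and> covered (hadj R) S x"
  hence y: "3 \<le> card (V \<inter> T)" and cover: "covered (hadj R) S x"
    unfolding T_def by auto
  have disjoint: "S \<inter> (V \<inter> T) = {}"
    using tile_index_unique unfolding S_def T_def by blast
  have "\<forall>u\<in>S \<union> (V \<inter> T). \<forall>v\<in>V \<inter> T. u \<noteq> v \<longrightarrow> hadj R u v \<and> hadj R v u"
    using hadj_tile_below[OF R] V below_refl hadj_sym unfolding S_def T_def by blast
  note join = covered_Un_universal[OF _ disjoint y this cover]
  have "set vs = S \<union> (V \<inter> T) \<Longrightarrow> edges_inside vs (V \<inter> T) = edges_inside vs T" for vs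
    unfolding S_def by (intro edges_inside_Int) auto
  thus "covered (hadj R) (S \<union> (V \<inter> tile R i j)) (nat (max 1 (int x - int (card (V \<inter> tile R i j)) + 1))) \<and>
    (x < card (V \<inter> tile R i j) \<longrightarrow> (\<exists>vs. is_cycle (hadj R) vs \<and> set vs = S \<union> (V \<inter> tile R i j) \<and>
      edges_inside vs (tile R i j) = card (V \<inter> tile R i j) - x))"
    using join V unfolding T_def by (metis finite_Int)
qed

end
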